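(* Let $d\ge1$, let $\gamma$ be the standard Gaussian measure $d\gamma(x)=(2\pi)^{-d/2}e^{-|x|^2/2}\,dx$ on $\mathbb{R}^d$, and let $\mathscr{L}=\frac12\Delta-\frac12x\cdot\nabla$ be the classical Ornstein–Uhlenbeck operator, a self-adjoint non-positive operator on $L^2(\mathbb{R}^d,\gamma)$. Then the unitary $C_0$-group $(e^{it\mathscr{L}})_{t\in\mathbb{R}}$ on $L^2(\mathbb{R}^d,\gamma)$ has infinite speed of propagation.
   Context: The semigroup generated by $\mathscr{L}$ is $e^{t\mathscr{L}}f(x)=\int_{\mathbb{R}^d}M_t(x,y)f(y)\,dy$ with $M_t(x,y)=(2\pi)^{-d/2}(1-e^{-2t})^{-d/2}\exp\big(-\frac12\frac{|e^{-t}x-y|^2}{1-e^{-2t}}\big)$. A one-parameter family $(T_t)_{t\in\mathbb{R}}$ of bounded operators on $L^2(E,\mu;\mathscr{H})$ ($\mathscr{H}$ a Hilbert space, here $E=\mathbb{R}^d$, $\mu=\gamma$, $\mathscr{H}=\mathbb{C}$) has speed of propagation $\kappa$ if for all closed $K\subseteq E$, all $u$ and all $t\in\mathbb{R}$, $\operatorname{supp}(u)\subseteq K$ implies $\operatorname{supp}(T_tu)\subseteq K_{\kappa|t|}:=\{x:\operatorname{dist}(x,K)\le\kappa|t|\}$. It has infinite speed of propagation if it does not have speed of propagation $\kappa$ for any finite $\kappa$. *)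

theory Defs
  imports "HOL-Analysis.Analysis"
begin

text \<open>Standard Gaussian measure on a Euclidean space 'a (d = DIM('a) \<ge> 1).\<close>
definition gauss_measure :: "'a::euclidean_space measure" where
  "gauss_measure = density lborel
     (\<lambda>x. ennreal ((2 * pi) powr (- real DIM('a) / 2) * exp (- (norm x)\<^sup>2 / 2)))"

text \<open>Square-integrable complex functions (representatives of elements of L^2(M)).\<close>
definition sq_integrable :: "'a measure \<Rightarrow> ('a \<Rightarrow> complex) \<Rightarrow> bool" where
  "sq_integrable M u \<longleftrightarrow> u \<in> borel_measurable M \<and> integrable M (\<lambda>x. (cmod (u x))\<^sup>2)"

fun hermite :: "nat \<Rightarrow> real \<Rightarrow> real" where
  "hermite 0 x = 1"
| "hermite (Suc 0) x = x"
| "hermite (Suc (Suc n)) x = x * hermite (Suc n) x - real (Suc n) * hermite n x"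

text \<open>Normalised multivariate Hermite polynomials h_alpha: an orthonormal basis of
  L^2(gamma) consisting of eigenfunctions of the Ornstein-Uhlenbeck operator,
  with L h_alpha = -|alpha|/2 h_alpha.\<close>
definition herm :: "('a::euclidean_space \<Rightarrow> nat) \<Rightarrow> 'a \<Rightarrow> real" where
  "herm \<alpha> x = (\<Prod>b\<in>Basis. hermite (\<alpha> b) (x \<bullet> b) / sqrt (fact (\<alpha> b)))"

definition mindex_size :: "('a::euclidean_space \<Rightarrow> nat) \<Rightarrow> nat" where
  "mindex_size \<alpha> = (\<Sum>b\<in>Basis. \<alpha> b)"

text \<open>L^2(gamma) inner product of u with h_alpha (h_alpha is real-valued).\<close>
definition herm_coeff :: "('a::euclidean_space \<Rightarrow> complex) \<Rightarrow> ('a \<Rightarrow> nat) \<Rightarrow> complex" where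
  "herm_coeff u \<alpha> = (LINT x|gauss_measure. u x * complex_of_real (herm \<alpha> x))"

text \<open>ou_group t u v: v is (a representative of) e^{itL} u in L^2(gamma), where
  e^{itL} is defined by spectral calculus for the self-adjoint operator L, i.e.
  e^{itL} h_alpha = e^{-it|alpha|/2} h_alpha.\<close>
definition ou_group :: "real \<Rightarrow> ('a::euclidean_space \<Rightarrow> complex) \<Rightarrow> ('a \<Rightarrow> complex) \<Rightarrow> bool" where
  "ou_group t u v \<longleftrightarrow> sq_integrable gauss_measure u \<and> sq_integrable gauss_measure v \<and>
     (\<forall>\<alpha>. herm_coeff v \<alpha> = exp (- (\<i> * complex_of_real (t * real (mindex_size \<alpha>) / 2))) * herm_coeff u \<alpha>)"

definition ess_supp :: "'a::topological_space measure \<Rightarrow> ('a \<Rightarrow> 'b::zero) \<Rightarrow> 'a set" where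
  "ess_supp M u = - \<Union>{U. open U \<and> (AE x in M. x \<in> U \<longrightarrow> u x = 0)}"

text \<open>K_r = {x. dist(x,K) \<le> r}, with dist(x,{}) = infinity.\<close>
definition enlarge :: "'a::metric_space set \<Rightarrow> real \<Rightarrow> 'a set" where
  "enlarge K r = {x. K \<noteq> {} \<and> infdist x K \<le> r}"

text \<open>Speed of propagation for a family T given as a relation: T t u v means v = T_t u.\<close>
definition has_speed_of_propagation ::
  "'a::metric_space measure \<Rightarrow> real \<Rightarrow> (real \<Rightarrow> ('a \<Rightarrow> 'b::zero) \<Rightarrow> ('a \<Rightarrow> 'b) \<Rightarrow> bool) \<Rightarrow> bool" where
  "has_speed_of_propagation M \<kappa> T \<longleftrightarrow>
     (\<forall>K u t v. closed K \<longrightarrow> T t u v \<longrightarrow> ess_supp M u \<subseteq> K \<longrightarrow>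
        ess_supp M v \<subseteq> enlarge K (\<kappa> * \<bar>t\<bar>))"

definition has_infinite_speed_of_propagation ::
  "'a::metric_space measure \<Rightarrow> (real \<Rightarrow> ('a \<Rightarrow> 'b::zero) \<Rightarrow> ('a \<Rightarrow> 'b) \<Rightarrow> bool) \<Rightarrow> bool" where
  "has_infinite_speed_of_propagation M T \<longleftrightarrow> (\<forall>\<kappa>. \<not> has_speed_of_propagation M \<kappa> T)"

end

theory Submission imports Defs begin

text \<open>Since \<open>L h\<^sub>\<alpha> = -|\<alpha>|/2 h\<^sub>\<alpha>\<close>, the operator \<open>exp(2\<pi>iL)\<close> multiplies \<open>h\<^sub>\<alpha>\<close> by
  \<open>exp(-i\<pi>|\<alpha>|) = (-1)^|\<alpha>|\<close>. As \<open>h\<^sub>\<alpha>\<close> has parity \<open>(-1)^|\<alpha>|\<close> and \<open>\<gamma>\<close> is symmetric, this is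
  exactly how the reflection \<open>u \<mapsto> u(-x)\<close> acts on Hermite coefficients, so \<open>exp(2\<pi>iL)\<close> is that
  reflection. It maps the indicator of the unit ball around \<open>p\<close> to the indicator of the unit
  ball around \<open>-p\<close>, which lies at distance \<open>2|p| - 1\<close> from the original ball; taking \<open>|p|\<close>
  large beats any propagation bound \<open>2\<pi>\<kappa>\<close>.\<close>

lemma distr_uminus_lborel: "distr lborel borel uminus = (lborel :: 'a::euclidean_space measure)"
proof -
  have "(lborel::'a measure) =
      density (distr lborel borel (\<lambda>x. 0 + (-1::real) *\<^sub>R x)) (\<lambda>_. \<bar>-1::real\<bar> ^ DIM('a))"
    by (rule lborel_affine) simp
  then show ?thesis by (simp add: density_1)
qed

definition gauss_density :: "'a::euclidean_space \<Rightarrow> ennreal" where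
  "gauss_density x = ennreal ((2 * pi) powr (- real DIM('a) / 2) * exp (- (norm x)\<^sup>2 / 2))"

lemma gauss_measure_eq_density: "gauss_measure = density lborel gauss_density"
  by (simp add: gauss_measure_def gauss_density_def[abs_def])

lemma borel_measurable_gauss_density [measurable]: "gauss_density \<in> borel_measurable borel"
  unfolding gauss_density_def by measurable

lemma gauss_density_pos: "0 < gauss_density x"
  by (simp add: gauss_density_def)

lemma gauss_density_le_1: "gauss_density x \<le> 1"
proof -
  have "(2 * pi) powr (- real DIM('a) / 2) \<le> 1"
    using pi_gt3 powr_mono[of "- real DIM('a) / 2" 0 "2 * pi"] by simp
  moreover have "exp (- (norm x)\<^sup>2 / 2) \<le> 1" by simp
  ultimately have "(2 * pi) powr (- real DIM('a) / 2) * exp (- (norm x)\<^sup>2 / 2) \<le> 1"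
    using mult_mono by fastforce
  then show ?thesis by (simp add: gauss_density_def ennreal_le_1)
qed

lemma gauss_density_uminus: "gauss_density (- x) = gauss_density x"
  by (simp add: gauss_density_def)

lemma sets_gauss_measure [simp, measurable_cong]: "sets gauss_measure = sets borel"
  by (simp add: gauss_measure_eq_density)

lemma space_gauss_measure [simp]: "space gauss_measure = UNIV"
  by (simp add: gauss_measure_eq_density)

lemma AE_gauss_measure_iff: "(AE x in gauss_measure. P x) \<longleftrightarrow> (AE x in lborel. P x)"
  unfolding gauss_measure_eq_density
  by (subst AE_density) (auto simp: gauss_density_pos)

lemma emeasure_gauss_measure_le_lborel:
  assumes "A \<in> sets borel"
  shows "emeasure gauss_measure A \<le> emeasure lborel A"
proof -
  have "emeasure gauss_measure A = (\<integral>\<^sup>+x. gauss_density x * indicator A x \<partial>lborel)"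
    using assms by (simp add: gauss_measure_eq_density emeasure_density)
  also have "\<dots> \<le> (\<integral>\<^sup>+x. indicator A x \<partial>lborel)"
    by (intro nn_integral_mono) (auto simp: gauss_density_le_1 split: split_indicator)
  finally show ?thesis using assms by simp
qed

lemma distr_uminus_gauss_measure: "distr gauss_measure gauss_measure uminus = gauss_measure"
proof -
  have "distr gauss_measure gauss_measure uminus =
      distr (density lborel (\<lambda>x. gauss_density (- x))) borel uminus"
    by (intro distr_cong) (simp_all add: gauss_measure_eq_density gauss_density_uminus)
  also have "\<dots> = density (distr lborel borel uminus) gauss_density"
    by (rule density_distr[symmetric]) auto
  finally show ?thesis by (simp add: distr_uminus_lborel gauss_measure_eq_density)
qed

lemma sq_integrable_indicator_bounded:
  fixes A :: "'a::euclidean_space set"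
  assumes A: "A \<in> sets borel" "bounded A"
  shows "sq_integrable gauss_measure (indicator A :: 'a \<Rightarrow> complex)"
proof -
  obtain c r where "A \<subseteq> cball c r" using A(2) by (auto simp: bounded_subset_cball)
  then have "emeasure lborel A \<le> emeasure lborel (cball c r)"
    by (intro emeasure_mono) auto
  also have "\<dots> < \<infinity>" by (rule emeasure_lborel_cball_finite)
  finally have "emeasure gauss_measure A < \<infinity>"
    using emeasure_gauss_measure_le_lborel[OF A(1)] by (rule le_less_trans[rotated])
  then have "integrable gauss_measure (indicator A :: 'a \<Rightarrow> real)"
    using A(1) by (simp add: integrable_indicator_iff)
  moreover have "(cmod (indicator A x :: complex))\<^sup>2 = indicator A x" for x
    by (simp split: split_indicator)
  ultimately show ?thesis using A(1) by (simp add: sq_integrable_def)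
qed

lemma sq_integrable_reflect:
  assumes "sq_integrable gauss_measure u"
  shows "sq_integrable gauss_measure (\<lambda>x. u (- x))"
proof -
  have [measurable]: "u \<in> borel_measurable gauss_measure"
    using assms unfolding sq_integrable_def ..
  have "integrable (distr gauss_measure gauss_measure uminus) (\<lambda>x. (cmod (u x))\<^sup>2)"
    using assms unfolding distr_uminus_gauss_measure sq_integrable_def ..
  then have "integrable gauss_measure (\<lambda>x. (cmod (u (- x)))\<^sup>2)"
    by (subst (asm) integrable_distr_eq) measurable
  moreover have "(\<lambda>x. u (- x)) \<in> borel_measurable gauss_measure" by measurable
  ultimately show ?thesis unfolding sq_integrable_def by blast
qed

lemma hermite_uminus: "hermite n (- x) = (-1) ^ n * hermite n x"
  by (induction n x rule: hermite.induct) (auto simp: algebra_simps)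

lemma continuous_on_hermite: "continuous_on UNIV (hermite n)"
proof -
  have "continuous_on UNIV (hermite n) \<and> continuous_on UNIV (hermite (Suc n))"
  proof (induction n)
    case 0
    then show ?case by (auto simp: continuous_on_id continuous_on_const cong: continuous_on_cong)
  next
    case (Suc n)
    have "hermite (Suc (Suc n)) = (\<lambda>x. x * hermite (Suc n) x - real (Suc n) * hermite n x)"
      by (rule ext) simp
    with Suc show ?case by (auto intro!: continuous_intros)
  qed
  then show ?thesis ..
qed

lemma herm_uminus: "herm \<alpha> (- x) = (-1) ^ mindex_size \<alpha> * herm \<alpha> x"
proof -
  have "herm \<alpha> (- x) =
      (\<Prod>b\<in>Basis. (-1) ^ \<alpha> b * (hermite (\<alpha> b) (x \<bullet> b) / sqrt (fact (\<alpha> b))))"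
    by (auto simp: herm_def inner_minus_left hermite_uminus intro!: prod.cong)
  also have "\<dots> = (\<Prod>b\<in>Basis. (-1) ^ \<alpha> b) * herm \<alpha> x"
    by (simp only: prod.distrib herm_def)
  finally show ?thesis by (simp add: power_sum mindex_size_def)
qed

lemma borel_measurable_herm [measurable]: "herm \<alpha> \<in> borel_measurable borel"
proof -
  have "continuous_on UNIV (herm \<alpha>)"
    unfolding herm_def[abs_def]
    by (intro continuous_intros continuous_on_compose2[OF continuous_on_hermite]) auto
  then show ?thesis by (rule borel_measurable_continuous_onI)
qed

lemma herm_coeff_reflect:
  fixes u :: "'a::euclidean_space \<Rightarrow> complex"
  assumes [measurable]: "u \<in> borel_measurable borel"
  shows "herm_coeff (\<lambda>x. u (- x)) \<alpha> = (-1) ^ mindex_size \<alpha> * herm_coeff u \<alpha>"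
proof -
  define g where "g y = u y * complex_of_real (herm \<alpha> y)" for y
  have [measurable]: "g \<in> borel_measurable borel" unfolding g_def by measurable
  have "u (- x) * complex_of_real (herm \<alpha> x) = (-1) ^ mindex_size \<alpha> * g (- x)" for x
  proof -
    have "(-1::complex) ^ mindex_size \<alpha> * (-1) ^ mindex_size \<alpha> = 1"
      by (simp flip: power_mult_distrib)
    then have "complex_of_real (herm \<alpha> x) = (-1) ^ mindex_size \<alpha> * complex_of_real (herm \<alpha> (- x))"
      by (simp add: herm_uminus mult.assoc[symmetric])
    then show ?thesis by (simp add: g_def ac_simps)
  qed
  then have "herm_coeff (\<lambda>x. u (- x)) \<alpha> = (-1) ^ mindex_size \<alpha> * (LINT x|gauss_measure. g (- x))"
    by (simp add: herm_coeff_def)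
  also have "(LINT x|gauss_measure. g (- x)) = integral\<^sup>L (distr gauss_measure gauss_measure uminus) g"
    by (rule integral_distr[symmetric]) auto
  also have "\<dots> = herm_coeff u \<alpha>"
    unfolding distr_uminus_gauss_measure herm_coeff_def g_def ..
  finally show ?thesis .
qed

lemma exp_minus_pi_mult_nat: "exp (- (\<i> * complex_of_real (2 * pi * real m / 2))) = (-1) ^ m"
proof -
  have "- (\<i> * complex_of_real (2 * pi * real m / 2)) = of_nat m * (- (\<i> * of_real pi))"
    by simp
  then have "exp (- (\<i> * complex_of_real (2 * pi * real m / 2))) = exp (- (\<i> * of_real pi)) ^ m"
    by (simp only: exp_of_nat_mult)
  then show ?thesis by (simp add: exp_minus)
qed

lemma ou_group_2pi_reflect:
  assumes "sq_integrable gauss_measure u"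
  shows "ou_group (2 * pi) u (\<lambda>x. u (- x))"
proof -
  have "u \<in> borel_measurable borel"
    using assms by (simp add: sq_integrable_def measurable_cong_sets[OF sets_gauss_measure refl])
  then have "herm_coeff (\<lambda>x. u (- x)) \<alpha> =
      exp (- (\<i> * complex_of_real (2 * pi * real (mindex_size \<alpha>) / 2))) * herm_coeff u \<alpha>" for \<alpha>
    by (simp only: herm_coeff_reflect exp_minus_pi_mult_nat)
  with assms sq_integrable_reflect[OF assms] show ?thesis
    unfolding ou_group_def by blast
qed

lemma ess_supp_subset:
  assumes "closed K" "\<And>x. x \<notin> K \<Longrightarrow> u x = 0"
  shows "ess_supp M u \<subseteq> K"
  using assms unfolding ess_supp_def by (auto intro!: exI[of _ "- K"])

lemma ess_supp_gauss_measure: "ess_supp gauss_measure u = ess_supp lborel u"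
  by (simp add: ess_supp_def AE_gauss_measure_iff)

lemma in_ess_supp_lborelI:
  fixes x :: "'a::euclidean_space"
  assumes "e > 0" "\<And>y. y \<in> ball x e \<Longrightarrow> u y \<noteq> 0"
  shows "x \<in> ess_supp lborel u"
  unfolding ess_supp_def
proof (intro ComplI notI)
  assume "x \<in> \<Union>{U. open U \<and> (AE y in lborel. y \<in> U \<longrightarrow> u y = 0)}"
  then obtain U where U: "open U" "x \<in> U" "AE y in lborel. y \<in> U \<longrightarrow> u y = 0"
    by blast
  obtain d where d: "d > 0" "ball x d \<subseteq> U" using U(1,2) open_contains_ball by blast
  define \<delta> where "\<delta> = min d e"
  have "\<delta> > 0" using d assms(1) by (simp add: \<delta>_def)
  have "AE y in lborel. y \<notin> ball x \<delta>"
    using U(3) by eventually_elim (use assms(2) d(2) in \<open>auto simp: \<delta>_def\<close>)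
  then have "emeasure lborel (ball x \<delta>) = 0"
    by (subst (asm) AE_iff_measurable[of "ball x \<delta>"]) auto
  with \<open>\<delta> > 0\<close> show False
    using unit_ball_vol_pos[of "real DIM('a)"] by (simp add: emeasure_ball)
qed

lemma reflected_indicator_in_ess_supp:
  fixes p :: "'a::euclidean_space"
  assumes "r > 0"
  shows "- p \<in> ess_supp gauss_measure (\<lambda>x. indicator (cball p r) (- x) :: complex)"
  unfolding ess_supp_gauss_measure
proof (rule in_ess_supp_lborelI[OF assms])
  fix y assume "y \<in> ball (- p) r"
  then show "(indicator (cball p r) (- y) :: complex) \<noteq> 0"
    using dist_minus[of "- p" y] by simp
qed

lemma infdist_cball_ge:
  assumes "r \<ge> 0"
  shows "dist x p - r \<le> infdist x (cball p r)"
proof -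
  have "dist x p - r \<le> dist x y" if "y \<in> cball p r" for y
    using that dist_triangle[of x p y] dist_commute[of y p] by simp
  moreover have "cball p r \<noteq> {}" using assms by simp
  ultimately show ?thesis
    unfolding infdist_notempty[OF \<open>cball p r \<noteq> {}\<close>] by (intro cINF_greatest) auto
qed

lemma uminus_notin_enlarge_cball:
  fixes p :: "'a::real_normed_vector"
  assumes "r \<ge> 0" "s < 2 * norm p - r"
  shows "- p \<notin> enlarge (cball p r) s"
proof -
  have "- p - p = - (2 *\<^sub>R p)" by (simp add: scaleR_2)
  then have "dist (- p) p = 2 * norm p" by (simp add: dist_norm)
  then show ?thesis
    using assms infdist_cball_ge[of r "- p" p] by (auto simp: enlarge_def)
qed

theorem theorem5p2:
  shows "has_infinite_speed_of_propagation (gauss_measure :: 'a::euclidean_space measure)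
           (ou_group :: real \<Rightarrow> ('a \<Rightarrow> complex) \<Rightarrow> ('a \<Rightarrow> complex) \<Rightarrow> bool)"
  unfolding has_infinite_speed_of_propagation_def has_speed_of_propagation_def
proof (intro allI notI)
  fix \<kappa> :: real
  assume speed: "\<forall>K u t v. closed K \<longrightarrow> ou_group t u v \<longrightarrow> ess_supp (gauss_measure::'a measure) u \<subseteq> K
    \<longrightarrow> ess_supp gauss_measure v \<subseteq> enlarge K (\<kappa> * \<bar>t\<bar>)"
  obtain b :: 'a where b: "b \<in> Basis" using nonempty_Basis by blast
  define p where "p = (\<bar>\<kappa>\<bar> * 2 * pi + 1) *\<^sub>R b"
  define u :: "'a \<Rightarrow> complex" where "u = indicator (cball p 1)"
  have ou: "ou_group (2 * pi) u (\<lambda>x. u (- x))"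
    unfolding u_def by (intro ou_group_2pi_reflect sq_integrable_indicator_bounded) auto
  have "ess_supp gauss_measure u \<subseteq> cball p 1"
    by (rule ess_supp_subset) (simp_all add: u_def)
  then have "ess_supp gauss_measure (\<lambda>x. u (- x)) \<subseteq> enlarge (cball p 1) (\<kappa> * \<bar>2 * pi\<bar>)"
    by (rule speed[rule_format, OF closed_cball ou])
  moreover have "- p \<in> ess_supp gauss_measure (\<lambda>x. u (- x))"
    unfolding u_def by (rule reflected_indicator_in_ess_supp) simp
  moreover have "\<kappa> * \<bar>2 * pi\<bar> < 2 * norm p - 1"
  proof -
    have "\<kappa> * (2 * pi) \<le> \<bar>\<kappa>\<bar> * (2 * pi)" "0 \<le> \<bar>\<kappa>\<bar> * (2 * pi)"
      using pi_gt_zero by (simp_all add: mult_right_mono)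
    moreover have "norm p = \<bar>\<kappa>\<bar> * (2 * pi) + 1"
      using b pi_gt_zero by (simp add: p_def)
    ultimately have "\<kappa> * (2 * pi) < 2 * norm p - 1" by linarith
    then show ?thesis by simp
  qed
  then have "- p \<notin> enlarge (cball p 1) (\<kappa> * \<bar>2 * pi\<bar>)"
    by (rule uminus_notin_enlarge_cball[rotated]) simp
  ultimately show False by blast
qed

end
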